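(* For every automaton $M$ and every node $s$, $\mathit{tauclose\_comp}\ M\ s = \mathit{tauclose}\ M\ s$.
   Context: Actions are $\mathit{NoAct}$ (silent) and $\mathit{AssAct}\ x\ v$. An edge is a record $(\mathit{source},\mathit{action},\mathit{dest})$; an automaton over a node type $N$ is a record with a finite list $\mathit{nodes}$ of nodes, a list $\mathit{edges}$ of edges and an initial node $\mathit{init\_s}$. $\mathit{tauclose\_step}\ M\ s\ X = \{s\}\cup X\cup\{n\in\mathit{nodes}(M) : \exists e\in\mathit{edges}(M).\ \mathit{source}\ e\in X \wedge \mathit{action}\ e=\mathit{NoAct}\wedge \mathit{dest}\ e=n\}$ for $X\subseteq N$; it is monotone in $X$, and $\mathit{tauclose}\ M\ s$ is the least fixed point of $X\mapsto\mathit{tauclose\_step}\ M\ s\ X$. $\mathit{tauclose\_comp\_aux}\ M\ s\ X = X$ if $\mathit{tauclose\_step}\ M\ s\ X = X$, and otherwise $\mathit{tauclose\_comp\_aux}\ M\ s\ X = \mathit{tauclose\_comp\_aux}\ M\ s\ (\mathit{tauclose\_step}\ M\ s\ X)$ (this recursion terminates). $\mathit{tauclose\_comp}\ M\ s = \mathit{tauclose\_comp\_aux}\ M\ s\ \emptyset$. *)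

theory Defs
  imports Main
begin

datatype ('x, 'v) action = NoAct | AssAct 'x 'v

record ('n, 'x, 'v) edge =
  source :: 'n
  action :: "('x, 'v) action"
  dest :: 'n

record ('n, 'x, 'v) automaton =
  nodes :: "'n list"
  edges :: "('n, 'x, 'v) edge list"
  init_s :: 'n

definition tauclose_step :: "('n, 'x, 'v) automaton \<Rightarrow> 'n \<Rightarrow> 'n set \<Rightarrow> 'n set" where
  "tauclose_step M s X = {s} \<union> X \<union>
     {n \<in> set (nodes M). \<exists>e \<in> set (edges M). source e \<in> X \<and> action e = NoAct \<and> dest e = n}"

lemma tauclose_step_mono: "mono (tauclose_step M s)"
  unfolding tauclose_step_def mono_def by blast

definition tauclose :: "('n, 'x, 'v) automaton \<Rightarrow> 'n \<Rightarrow> 'n set" where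
  "tauclose M s = lfp (tauclose_step M s)"

function tauclose_comp_aux :: "('n, 'x, 'v) automaton \<Rightarrow> 'n \<Rightarrow> 'n set \<Rightarrow> 'n set" where
  "tauclose_comp_aux M s X =
     (if tauclose_step M s X = X then X else tauclose_comp_aux M s (tauclose_step M s X))"
  by auto
termination
proof (relation "measure (\<lambda>(M, s, X). card (({s} \<union> set (nodes M)) - X))")
  fix M :: "('n, 'x, 'v) automaton" and s X
  assume ne: "tauclose_step M s X \<noteq> X"
  have sub: "X \<subseteq> tauclose_step M s X" unfolding tauclose_step_def by blast
  have new: "tauclose_step M s X - X \<subseteq> {s} \<union> set (nodes M)"
    unfolding tauclose_step_def by blast
  then obtain y where y: "y \<in> tauclose_step M s X" "y \<notin> X" "y \<in> {s} \<union> set (nodes M)"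
    using ne sub by blast
  have "({s} \<union> set (nodes M)) - tauclose_step M s X \<subset> ({s} \<union> set (nodes M)) - X"
    using sub y by blast
  then show "((M, s, tauclose_step M s X), M, s, X)
        \<in> measure (\<lambda>(M, s, X). card (({s} \<union> set (nodes M)) - X))"
    by (simp add: psubset_card_mono)
qed auto

declare tauclose_comp_aux.simps [simp del]

definition tauclose_comp :: "('n, 'x, 'v) automaton \<Rightarrow> 'n \<Rightarrow> 'n set" where
  "tauclose_comp M s = tauclose_comp_aux M s {}"

end

theory Submission
  imports Defs
begin

text \<open>The iteration from the empty set stops at a fixed point of the step function, hence it
  contains the least fixed point; and by monotonicity every iterate stays below any pre-fixed
  point, in particular below the least fixed point.\<close>

lemma tauclose_comp_aux_fixpoint:
  "tauclose_step M s (tauclose_comp_aux M s X) = tauclose_comp_aux M s X"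
proof (induction M s X rule: tauclose_comp_aux.induct)
  case (1 M s X)
  then show ?case by (subst (1 2) tauclose_comp_aux.simps) auto
qed

lemma tauclose_comp_aux_le_prefixpoint:
  "tauclose_step M s Y \<subseteq> Y \<Longrightarrow> X \<subseteq> Y \<Longrightarrow> tauclose_comp_aux M s X \<subseteq> Y"
proof (induction M s X rule: tauclose_comp_aux.induct)
  case (1 M s X)
  then have "tauclose_step M s X \<subseteq> Y"
    using monoD[OF tauclose_step_mono, of X Y M s] by blast
  with 1 show ?case by (subst tauclose_comp_aux.simps) auto
qed

theorem theorem3:
  fixes M :: "('n, 'x, 'v) automaton" and s :: 'n
  shows "tauclose_comp M s = tauclose M s"
  unfolding tauclose_comp_def tauclose_def
proof (rule antisym)
  show "tauclose_comp_aux M s {} \<subseteq> lfp (tauclose_step M s)"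
    by (rule tauclose_comp_aux_le_prefixpoint)
       (simp_all add: lfp_fixpoint[OF tauclose_step_mono])
  show "lfp (tauclose_step M s) \<subseteq> tauclose_comp_aux M s {}"
    by (rule lfp_lowerbound) (simp add: tauclose_comp_aux_fixpoint)
qed

end
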